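(* Let $G$ be a finite graph and $H=(H_{ij})$ a matrix indexed by its vertices with $H_{ij}\ge0$, $H_{ij}=0$ unless $\langle ij\rangle$ is an edge, and $H_{ij}\le h$ for all edges. Suppose every vertex has degree at most $\lambda$. Let $G_{ij}(t)=[e^{Ht}]_{ij}$ and let $d_{ij}$ be the graph distance between vertices $i$ and $j$. Then for all vertices $i,j$ with $d_{ij}\ge1$ and all $0\le t<d_{ij}/(\lambda h e)$, $$G_{ij}(t)\le\left(\frac{\lambda h t e}{d_{ij}}\right)^{d_{ij}}\frac{1/e}{1-\lambda h t e/d_{ij}}.$$ *)

theory Defs
  imports Complex_Main
begin

definition simple_graph :: "('v \<Rightarrow> 'v \<Rightarrow> bool) \<Rightarrow> bool" where
  "simple_graph E \<longleftrightarrow> (\<forall>i j. E i j \<longrightarrow> E j i) \<and> (\<forall>i. \<not> E i i)"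

definition degree :: "('v \<Rightarrow> 'v \<Rightarrow> bool) \<Rightarrow> 'v \<Rightarrow> nat" where
  "degree E i = card {j. E i j}"

definition walk_len :: "('v \<Rightarrow> 'v \<Rightarrow> bool) \<Rightarrow> 'v \<Rightarrow> 'v \<Rightarrow> nat \<Rightarrow> bool" where
  "walk_len E i j n \<longleftrightarrow> (\<exists>p :: nat \<Rightarrow> 'v. p 0 = i \<and> p n = j \<and> (\<forall>k<n. E (p k) (p (Suc k))))"

definition connected_pair :: "('v \<Rightarrow> 'v \<Rightarrow> bool) \<Rightarrow> 'v \<Rightarrow> 'v \<Rightarrow> bool" where
  "connected_pair E i j \<longleftrightarrow> (\<exists>n. walk_len E i j n)"

text \<open>Graph distance (meaningful when i and j are connected).\<close>
definition graph_dist :: "('v \<Rightarrow> 'v \<Rightarrow> bool) \<Rightarrow> 'v \<Rightarrow> 'v \<Rightarrow> nat" where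
  "graph_dist E i j = (LEAST n. walk_len E i j n)"

fun mat_pow :: "('v::finite \<Rightarrow> 'v \<Rightarrow> real) \<Rightarrow> nat \<Rightarrow> 'v \<Rightarrow> 'v \<Rightarrow> real" where
  "mat_pow H 0 = (\<lambda>i j. if i = j then 1 else 0)"
| "mat_pow H (Suc k) = (\<lambda>i j. \<Sum>l\<in>UNIV. H i l * mat_pow H k l j)"

definition mat_exp_entry :: "('v::finite \<Rightarrow> 'v \<Rightarrow> real) \<Rightarrow> real \<Rightarrow> 'v \<Rightarrow> 'v \<Rightarrow> real" where
  "mat_exp_entry H t i j = (\<Sum>k. t ^ k / fact k * mat_pow H k i j)"

end

theory Submission
  imports Defs
begin

text \<open>Since H vanishes off the edges, the (i,j) entry of H^k vanishes unless there is a walk of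
length k from i to j, so the exponential series for G_ij(t) starts at k = d_ij. Row sums of H
are at most \<lambda>h, hence the k-th term is at most (\<lambda>ht)^k / k!, and the Stirling-type bound
k! \<ge> k^k e^(1-k) turns it into (\<lambda>hte/k)^k / e \<le> (\<lambda>hte/d_ij)^k / e. Summing this geometric
tail from k = d_ij gives the claim.\<close>

lemma mat_pow_nonneg:
  assumes "\<And>a b. 0 \<le> H a b"
  shows "0 \<le> mat_pow H k i j"
  using assms by (induction k arbitrary: i j) (auto intro!: sum_nonneg)

lemma mat_pow_le_power_row_sum_bound:
  assumes nonneg: "\<And>a b. 0 \<le> H a b"
    and row_sum: "\<And>a. (\<Sum>l\<in>UNIV. H a l) \<le> c"
    and "0 \<le> c"
  shows "mat_pow H k i j \<le> c ^ k"
proof (induction k arbitrary: i j)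
  case 0
  then show ?case by simp
next
  case (Suc k)
  have "mat_pow H (Suc k) i j = (\<Sum>l\<in>UNIV. H i l * mat_pow H k l j)"
    by simp
  also have "\<dots> \<le> (\<Sum>l\<in>UNIV. H i l * c ^ k)"
    by (intro sum_mono mult_left_mono Suc nonneg)
  also have "\<dots> = c ^ k * (\<Sum>l\<in>UNIV. H i l)"
    by (simp add: sum_distrib_left mult.commute)
  also have "\<dots> \<le> c ^ k * c"
    using row_sum \<open>0 \<le> c\<close> by (intro mult_left_mono) auto
  finally show ?case
    by (simp add: mult.commute)
qed

lemma walk_len_Suc_if_edge:
  assumes "E i l" and "walk_len E l j k"
  shows "walk_len E i j (Suc k)"
proof -
  obtain p where p: "p 0 = l" "p k = j" "\<forall>m<k. E (p m) (p (Suc m))"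
    using assms(2) unfolding walk_len_def by blast
  define q where "q m = (if m = 0 then i else p (m - 1))" for m
  have "E (q m) (q (Suc m))" if "m < Suc k" for m
    using p assms(1) that by (cases m) (auto simp: q_def)
  moreover have "q 0 = i" "q (Suc k) = j"
    using p by (auto simp: q_def)
  ultimately show ?thesis
    unfolding walk_len_def by blast
qed

lemma walk_len_if_mat_pow_nonzero:
  assumes "\<And>a b. \<not> E a b \<Longrightarrow> H a b = 0"
    and "mat_pow H k i j \<noteq> 0"
  shows "walk_len E i j k"
  using assms(2)
proof (induction k arbitrary: i)
  case 0
  then show ?case by (auto simp: walk_len_def split: if_splits)
next
  case (Suc k)
  then obtain l where l: "H i l * mat_pow H k l j \<noteq> 0"
    by (auto elim: sum.not_neutral_contains_not_neutral)
  then have "E i l"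
    using assms(1) by force
  with l Suc.IH show ?case
    by (auto intro: walk_len_Suc_if_edge)
qed

lemma mat_pow_eq_0_if_less_graph_dist:
  assumes "\<And>a b. \<not> E a b \<Longrightarrow> H a b = 0"
    and "k < graph_dist E i j"
  shows "mat_pow H k i j = 0"
  using assms walk_len_if_mat_pow_nonzero not_less_Least
  unfolding graph_dist_def by metis

lemma walk_len_graph_dist:
  assumes "connected_pair E i j"
  shows "walk_len E i j (graph_dist E i j)"
  using assms unfolding connected_pair_def graph_dist_def by (rule LeastI_ex)

lemma edge_if_walk_len_pos:
  assumes "walk_len E i j n" and "1 \<le> n"
  obtains l where "E i l"
  using assms unfolding walk_len_def by force

lemma row_sum_le_degree_mult:
  fixes E :: "'v::finite \<Rightarrow> 'v \<Rightarrow> bool"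
  assumes "\<And>b. \<not> E a b \<Longrightarrow> H a b = 0"
    and "\<And>b. E a b \<Longrightarrow> H a b \<le> h"
    and "real (degree E a) \<le> lam"
    and "0 \<le> h"
  shows "(\<Sum>b\<in>UNIV. H a b) \<le> lam * h"
proof -
  have "(\<Sum>b\<in>UNIV. H a b) = (\<Sum>b\<in>{b. E a b}. H a b)"
    using assms(1) by (intro sum.mono_neutral_right) auto
  also have "\<dots> \<le> real (degree E a) * h"
    using sum_bounded_above[of "{b. E a b}" "H a" h] assms(2) by (auto simp: degree_def)
  also have "\<dots> \<le> lam * h"
    using assms(3,4) by (rule mult_right_mono)
  finally show ?thesis .
qed

lemma one_plus_inverse_power_le_exp_1: "(1 + 1 / real k) ^ k \<le> exp 1"
proof (cases "k = 0")
  case False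
  have "(1 + 1 / real k) ^ k \<le> exp (1 / real k) ^ k"
    by (intro power_mono) (auto simp: exp_ge_add_one_self)
  also have "\<dots> = exp 1"
    using False by (simp flip: exp_of_nat_mult)
  finally show ?thesis .
qed simp

lemma power_self_le_fact_mult_exp:
  assumes "1 \<le> k"
  shows "real k ^ k \<le> fact k * exp (real k - 1)"
  using assms
proof (induction k rule: dec_induct)
  case base
  then show ?case by simp
next
  case (step k)
  have "real (Suc k) ^ k = real k ^ k * (1 + 1 / real k) ^ k"
    using step.hyps by (simp add: field_simps flip: power_mult_distrib)
  also have "\<dots> \<le> real k ^ k * exp 1"
    by (intro mult_left_mono one_plus_inverse_power_le_exp_1) auto
  finally have "real (Suc k) ^ Suc k \<le> real (Suc k) * (real k ^ k * exp 1)"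
    by (simp add: mult_left_mono)
  also have "\<dots> \<le> real (Suc k) * (fact k * exp (real k - 1) * exp 1)"
    by (intro mult_left_mono mult_right_mono step.IH) auto
  also have "\<dots> = fact (Suc k) * exp (real (Suc k) - 1)"
    by (simp add: algebra_simps flip: exp_add)
  finally show ?case .
qed

lemma power_divide_fact_le:
  fixes y :: real
  assumes "0 \<le> y" and "1 \<le> k"
  shows "y ^ k / fact k \<le> (y * exp 1 / real k) ^ k / exp 1"
proof -
  have pos: "0 < real k ^ k / exp (real k - 1)"
    using assms(2) by simp
  have "y ^ k / fact k \<le> y ^ k / (real k ^ k / exp (real k - 1))"
    using power_self_le_fact_mult_exp[OF assms(2)] pos assms(1)
    by (intro divide_left_mono mult_pos_pos) (auto simp: divide_le_eq)
  also have "\<dots> = (y * exp 1 / real k) ^ k / exp 1"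
    by (simp add: exp_diff power_divide power_mult_distrib flip: exp_of_nat_mult)
  finally show ?thesis .
qed

lemma suminf_le_geometric_tail:
  fixes f :: "nat \<Rightarrow> real"
  assumes zero: "\<And>k. k < d \<Longrightarrow> f k = 0"
    and bound: "\<And>k. d \<le> k \<Longrightarrow> 0 \<le> f k \<and> f k \<le> C * x ^ k"
    and "0 \<le> C" "0 \<le> x" "x < 1"
  shows "suminf f \<le> C * x ^ d / (1 - x)"
proof -
  define g where "g k = f (k + d)" for k
  have g_le: "g k \<le> C * x ^ d * x ^ k" for k
    using bound[of "k + d"] by (simp add: g_def power_add mult_ac)
  have geom: "summable (\<lambda>k. C * x ^ d * x ^ k)"
    using assms(4,5) by (intro summable_mult summable_geometric) auto
  have "summable g"
    using bound g_le by (intro summable_comparison_test[OF _ geom]) (auto simp: g_def)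
  then have "suminf f = suminf g + (\<Sum>k<d. f k)"
    unfolding g_def by (intro suminf_split_initial_segment) (simp add: summable_iff_shift)
  also have "\<dots> = suminf g"
    using zero by simp
  also have "\<dots> \<le> (\<Sum>k. C * x ^ d * x ^ k)"
    by (intro suminf_le g_le \<open>summable g\<close> geom)
  also have "\<dots> = C * x ^ d / (1 - x)"
    using assms(4,5) by (simp add: suminf_mult suminf_geometric)
  finally show ?thesis .
qed

lemma mat_exp_entry_le_geometric_tail:
  assumes nonneg: "\<And>a b. 0 \<le> H a b"
    and row_sum: "\<And>a. (\<Sum>l\<in>UNIV. H a l) \<le> c"
    and "0 \<le> c"
    and vanish: "\<And>k. k < d \<Longrightarrow> mat_pow H k i j = 0"
    and "1 \<le> d" and "0 \<le> t" and "c * t * exp 1 < real d"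
  shows "mat_exp_entry H t i j
          \<le> (c * t * exp 1 / real d) ^ d * ((1 / exp 1) / (1 - c * t * exp 1 / real d))"
proof -
  define x where "x = c * t * exp 1 / real d"
  have "0 \<le> x" "x < 1"
    using assms(3,5,6,7) by (auto simp: x_def)
  have term_le: "t ^ k / fact k * mat_pow H k i j \<le> (1 / exp 1) * x ^ k" if "d \<le> k" for k
  proof -
    have "t ^ k / fact k * mat_pow H k i j \<le> t ^ k / fact k * c ^ k"
      using mat_pow_le_power_row_sum_bound[OF nonneg row_sum \<open>0 \<le> c\<close>] \<open>0 \<le> t\<close>
      by (intro mult_left_mono) auto
    also have "\<dots> = (c * t) ^ k / fact k"
      by (simp add: power_mult_distrib)
    also have "\<dots> \<le> (c * t * exp 1 / real k) ^ k / exp 1"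
      using assms(3,5,6) that by (intro power_divide_fact_le) auto
    also have "\<dots> \<le> (1 / exp 1) * x ^ k"
      using assms(3,5,6) that unfolding x_def
      by (auto intro!: divide_right_mono power_mono divide_left_mono)
    finally show ?thesis .
  qed
  have "mat_exp_entry H t i j \<le> (1 / exp 1) * x ^ d / (1 - x)"
    unfolding mat_exp_entry_def
  proof (rule suminf_le_geometric_tail)
    show "t ^ k / fact k * mat_pow H k i j = 0" if "k < d" for k
      using vanish[OF that] by simp
    show "0 \<le> t ^ k / fact k * mat_pow H k i j \<and> t ^ k / fact k * mat_pow H k i j \<le> (1 / exp 1) * x ^ k"
      if "d \<le> k" for k
      using term_le[OF that] \<open>0 \<le> t\<close> by (simp add: mat_pow_nonneg nonneg)
  qed (use \<open>0 \<le> x\<close> \<open>x < 1\<close> in auto)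
  then show ?thesis
    by (simp add: x_def)
qed

theorem mainTheorem3:
  fixes E :: "'v::finite \<Rightarrow> 'v \<Rightarrow> bool"
    and H :: "'v \<Rightarrow> 'v \<Rightarrow> real"
    and h lam t :: real
    and i j :: 'v
  assumes "simple_graph E"
    and "\<And>a b. H a b \<ge> 0"
    and "\<And>a b. \<not> E a b \<Longrightarrow> H a b = 0"
    and "\<And>a b. E a b \<Longrightarrow> H a b \<le> h"
    and "\<And>a. real (degree E a) \<le> lam"
    and "connected_pair E i j"
    and "graph_dist E i j \<ge> 1"
    and "0 \<le> t"
    and "t < real (graph_dist E i j) / (lam * h * exp 1)"
  shows "mat_exp_entry H t i j
          \<le> (lam * h * t * exp 1 / real (graph_dist E i j)) ^ (graph_dist E i j)
             * ((1 / exp 1) / (1 - lam * h * t * exp 1 / real (graph_dist E i j)))"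
proof (rule mat_exp_entry_le_geometric_tail)
  obtain l where "E i l"
    using walk_len_graph_dist[OF assms(6)] assms(7) by (rule edge_if_walk_len_pos)
  then have "0 \<le> h"
    using assms(2,4) order.trans by blast
  then show "0 \<le> lam * h"
    using assms(5) order.trans[OF of_nat_0_le_iff] by (blast intro: mult_nonneg_nonneg)
  moreover have "lam * h \<noteq> 0"
    using assms(8,9) by auto
  ultimately have "0 < lam * h"
    by linarith
  then have "0 < lam * h * exp 1"
    by simp
  with assms(9) show "lam * h * t * exp 1 < real (graph_dist E i j)"
    by (simp add: pos_less_divide_eq mult_ac)
  show "(\<Sum>b\<in>UNIV. H a b) \<le> lam * h" for a
    using assms(3-5) \<open>0 \<le> h\<close> by (rule row_sum_le_degree_mult)
  show "mat_pow H k i j = 0" if "k < graph_dist E i j" for k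
    using assms(3) that by (rule mat_pow_eq_0_if_less_graph_dist)
qed (use assms(2,7,8) in auto)

end
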